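(* Fix integers $q\ge 1$ and $k\ge 4$, and let $G(q,k)$ be the graph on vertex set $\{v_0,v_1,\ldots,v_{kq}\}$ in which, with all indices taken modulo $kq+1$, the neighbourhood of $v_i$ is $$\{v_{i-1},v_{i+1}\}\cup\{v_{i+kj+m} : m=2,3,\ldots,k-1,\ j=0,1,\ldots,q-1\}.$$ Then $G(q,k)$ is $(K_3+P_1)$-free.
   Context: $K_3+P_1$ denotes the disjoint union of a triangle and a single isolated vertex. A graph is $H$-free if it contains no induced subgraph isomorphic to $H$. *)

theory Defs
  imports Main
begin

definition K3P1_free :: "'a set \<Rightarrow> ('a \<Rightarrow> 'a \<Rightarrow> bool) \<Rightarrow> bool" where
  "K3P1_free V E \<longleftrightarrow>
     \<not> (\<exists>a\<in>V. \<exists>b\<in>V. \<exists>c\<in>V. \<exists>d\<in>V. distinct [a, b, c, d] \<and>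
          E a b \<and> E b c \<and> E a c \<and> \<not> E a d \<and> \<not> E b d \<and> \<not> E c d)"

definition G_vertices :: "int \<Rightarrow> int \<Rightarrow> int set" where
  "G_vertices q k = {0..k*q}"

definition G_adj :: "int \<Rightarrow> int \<Rightarrow> int \<Rightarrow> int \<Rightarrow> bool" where
  "G_adj q k u v \<longleftrightarrow>
     (let n = k*q + 1 in
        v mod n = (u - 1) mod n \<or> v mod n = (u + 1) mod n \<or>
        (\<exists>m\<in>{2..k-1}. \<exists>j\<in>{0..q-1}. v mod n = (u + k*j + m) mod n))"

end

theory Submission
  imports Defs
begin

text \<open>Adjacency in G(q,k) depends only on the offset t = (v - u) mod (kq+1) in {0..kq}, and
  t is an offset of a neighbour iff t = 1, t = kq or t mod k \<ge> 2. Hence the offset from a vertex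
  to a distinct non-neighbour d lies in {2..kq-1} and is congruent to 0 or 1 mod k. Given a
  triangle a, b, c whose vertices are all non-adjacent to d, two of the three offsets to d, say
  those of x and y, are congruent mod k. Their difference is then the offset from x to y; it is
  a multiple of k (if non-negative) or a multiple of k plus kq+1 (if negative), in both cases
  an offset of a non-neighbour, contradicting the adjacency of x and y.\<close>

definition adjacent_offset :: "int \<Rightarrow> int \<Rightarrow> int \<Rightarrow> bool" where
  "adjacent_offset q k t \<longleftrightarrow> t = 1 \<or> t = k*q \<or> 2 \<le> t mod k"

lemma mod_eq_add_iff_diff_mod:
  fixes n u v c :: int
  shows "v mod n = (u + c) mod n \<longleftrightarrow> (v - u) mod n = c mod n"
  by (simp add: mod_eq_dvd_iff algebra_simps)

lemma G_adj_iff_adjacent_offset: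
  fixes q k u v :: int
  assumes "q \<ge> 1" and "k \<ge> 1"
  shows "G_adj q k u v \<longleftrightarrow> adjacent_offset q k ((v - u) mod (k*q+1))"
proof -
  define n where "n = k*q + 1"
  define t where "t = (v - u) mod n"
  have "k*q \<ge> k" using assms by simp
  then have n_gt: "n > 1" using assms n_def by linarith
  have "0 \<le> t" "t < n" using n_gt by (simp_all add: t_def)
  then have t_range: "0 \<le> t" "t \<le> k*q" by (simp_all add: n_def)
  have pred: "v mod n = (u - 1) mod n \<longleftrightarrow> t = k*q"
  proof -
    have "(-1) mod n = k*q" using n_gt by (simp add: n_def zmod_zminus1_eq_if)
    then show ?thesis using mod_eq_add_iff_diff_mod[of v n u "-1"] by (simp add: t_def)
  qed
  have succ: "v mod n = (u + 1) mod n \<longleftrightarrow> t = 1"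
    using mod_eq_add_iff_diff_mod[of v n u 1] n_gt by (simp add: t_def)
  have long: "(\<exists>m\<in>{2..k-1}. \<exists>j\<in>{0..q-1}. v mod n = (u + k*j + m) mod n) \<longleftrightarrow> 2 \<le> t mod k"
  proof
    assume "\<exists>m\<in>{2..k-1}. \<exists>j\<in>{0..q-1}. v mod n = (u + k*j + m) mod n"
    then obtain m j where m: "2 \<le> m" "m \<le> k - 1" and j: "0 \<le> j" "j \<le> q - 1"
      and eq: "v mod n = (u + (k*j + m)) mod n" by (auto simp: add.assoc)
    have "k*j \<le> k*(q - 1)" using j assms by simp
    then have "(k*j + m) mod n = k*j + m" using m j assms by (simp add: n_def algebra_simps)
    then have "t = k*j + m" using eq mod_eq_add_iff_diff_mod by (simp add: t_def)
    then show "2 \<le> t mod k" using m by simp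
  next
    assume r: "2 \<le> t mod k"
    have "t div k < q"
    proof (rule ccontr)
      assume "\<not> t div k < q"
      then have "k*q \<le> k*(t div k)" using assms by simp
      moreover have "t = k*(t div k) + t mod k" by simp
      ultimately show False using r t_range by linarith
    qed
    moreover have "0 \<le> t div k" using t_range assms by (simp add: pos_imp_zdiv_nonneg_iff)
    moreover have "t mod k \<le> k - 1" using assms by simp
    moreover have "v mod n = (u + k*(t div k) + t mod k) mod n"
      using mod_eq_add_iff_diff_mod[of v n u t] by (simp add: t_def add.assoc)
    ultimately show "\<exists>m\<in>{2..k-1}. \<exists>j\<in>{0..q-1}. v mod n = (u + k*j + m) mod n"
      using r by force
  qed
  show ?thesis
    unfolding G_adj_def Let_def adjacent_offset_def n_def[symmetric] t_def[symmetric]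
    using pred succ long by blast
qed

lemma mod_eq_if_bounded:
  fixes z n :: int
  assumes "-n \<le> z" and "z < n"
  shows "z mod n = (if 0 \<le> z then z else z + n)"
proof (cases "0 \<le> z")
  case True
  then show ?thesis using assms by simp
next
  case False
  then have "(z + n) mod n = z + n" using assms by (intro mod_pos_pos_trivial) auto
  then show ?thesis using False by simp
qed

lemma non_neighbour_offset:
  fixes q k x d :: int
  assumes "q \<ge> 1" and "k \<ge> 2"
    and "x \<in> G_vertices q k" and "d \<in> G_vertices q k" and "x \<noteq> d"
    and "\<not> G_adj q k x d"
  shows "2 \<le> (d - x) mod (k*q+1)" and "(d - x) mod (k*q+1) \<le> k*q - 1"
    and "(d - x) mod (k*q+1) mod k < 2"
proof -
  define t where "t = (d - x) mod (k*q+1)"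
  have "0 \<le> x" "x \<le> k*q" "0 \<le> d" "d \<le> k*q" using assms(3,4) by (auto simp: G_vertices_def)
  then have t_eq: "t = (if 0 \<le> d - x then d - x else d - x + (k*q+1))"
    unfolding t_def by (intro mod_eq_if_bounded) auto
  have "0 \<le> t" "t \<le> k*q" "t \<noteq> 0" using t_eq \<open>0 \<le> x\<close> \<open>x \<le> k*q\<close> \<open>0 \<le> d\<close> \<open>d \<le> k*q\<close> \<open>x \<noteq> d\<close>
    by (auto split: if_splits)
  moreover have "\<not> adjacent_offset q k t"
    using assms G_adj_iff_adjacent_offset[of q k x d] by (simp add: t_def)
  ultimately show "2 \<le> t" "t \<le> k*q - 1" "t mod k < 2"
    unfolding adjacent_offset_def by auto
qed

lemma offset_difference_not_adjacent:
  fixes q k s t :: int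
  assumes "k \<ge> 2"
    and "2 \<le> s" "s \<le> k*q - 1" and "2 \<le> t" "t \<le> k*q - 1"
    and "s mod k = t mod k"
  shows "\<not> adjacent_offset q k ((s - t) mod (k*q+1))"
proof -
  have diff_mod: "(s - t) mod k = 0" using assms(6) by (simp add: mod_eq_dvd_iff)
  have offset: "(s - t) mod (k*q+1) = (if 0 \<le> s - t then s - t else s - t + (k*q+1))"
    using assms by (intro mod_eq_if_bounded) auto
  show ?thesis
  proof (cases "0 \<le> s - t")
    case True
    then have "s - t \<noteq> 1" using diff_mod assms(1) by auto
    then show ?thesis using True offset diff_mod assms unfolding adjacent_offset_def by auto
  next
    case False
    have "(s - t + (k*q+1)) mod k = 1"
      using diff_mod assms(1) by (simp add: mod_add_eq[symmetric] mod_add_left_eq)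
    moreover have "s - t + (k*q+1) \<noteq> k*q"
      using calculation by (metis mod_mult_self1_is_0 zero_neq_one)
    ultimately show ?thesis using False offset assms unfolding adjacent_offset_def by auto
  qed
qed

lemma common_non_neighbour_same_residue_not_adjacent:
  fixes q k x y d :: int
  assumes "q \<ge> 1" and "k \<ge> 2"
    and "x \<in> G_vertices q k" and "y \<in> G_vertices q k" and "d \<in> G_vertices q k"
    and "x \<noteq> d" and "y \<noteq> d" and "\<not> G_adj q k x d" and "\<not> G_adj q k y d"
    and "(d - x) mod (k*q+1) mod k = (d - y) mod (k*q+1) mod k"
  shows "\<not> G_adj q k x y"
proof -
  have "(y - x) mod (k*q+1) = ((d - x) mod (k*q+1) - (d - y) mod (k*q+1)) mod (k*q+1)"
    by (simp add: mod_diff_eq)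
  then show ?thesis
    using G_adj_iff_adjacent_offset[of q k x y] offset_difference_not_adjacent[OF assms(2)]
      non_neighbour_offset[of q k x d] non_neighbour_offset[of q k y d] assms
    by simp
qed

theorem lemma2p4:
  fixes q k :: int
  assumes "q \<ge> 1" and "k \<ge> 4"
  shows "K3P1_free (G_vertices q k) (G_adj q k)"
  unfolding K3P1_free_def
proof clarify
  fix a b c d
  assume V: "a \<in> G_vertices q k" "b \<in> G_vertices q k" "c \<in> G_vertices q k" "d \<in> G_vertices q k"
    and "distinct [a, b, c, d]" and adj: "G_adj q k a b" "G_adj q k b c" "G_adj q k a c"
    and non_adj: "\<not> G_adj q k a d" "\<not> G_adj q k b d" "\<not> G_adj q k c d"
  define residue where "residue x = (d - x) mod (k*q+1) mod k" for x
  have k2: "k \<ge> 2" using assms by simp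
  have residue_01: "residue x \<in> {0, 1}" if "x \<in> {a, b, c}" for x
  proof -
    have "residue x < 2"
      using that non_neighbour_offset(3)[OF assms(1) k2 _ V(4)] V non_adj \<open>distinct [a, b, c, d]\<close>
      unfolding residue_def by auto
    moreover have "0 \<le> residue x" using k2 unfolding residue_def by simp
    ultimately show ?thesis by auto
  qed
  have "residue a = residue b \<or> residue b = residue c \<or> residue a = residue c"
    using residue_01[of a] residue_01[of b] residue_01[of c] by auto
  then show False
    using common_non_neighbour_same_residue_not_adjacent[OF assms(1) k2 _ _ V(4)]
      V adj non_adj \<open>distinct [a, b, c, d]\<close> unfolding residue_def by fastforce
qed

end
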